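(* Let $k\ge0$ be an integer and let $f:\mathbb{R}\to\mathbb{R}$ be a discontinuous $(2k+1)$-monomial function, and let $g(x)=xf(x)$. Then the graph $G(f)=\{(x,f(x)):x\in\mathbb{R}\}$ is connected if and only if the graph $G(g)=\{(x,g(x)):x\in\mathbb{R}\}$ is connected.
   Context: For $h\in\mathbb{R}$, $\Delta_h f(x)=f(x+h)-f(x)$ and $\Delta_h^{n}=\Delta_h\circ\Delta_h^{n-1}$. A function $f:\mathbb{R}\to\mathbb{R}$ is an $n$-monomial function if $\frac{1}{n!}\Delta_h^n f(x)=f(h)$ for all $x,h\in\mathbb{R}$. (Then $g$ is a discontinuous $(2k+2)$-monomial function.) *)

theory Defs
  imports "HOL-Analysis.Analysis"
begin

definition diff_op :: "real \<Rightarrow> (real \<Rightarrow> real) \<Rightarrow> (real \<Rightarrow> real)" where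
  "diff_op h f = (\<lambda>x. f (x + h) - f x)"

definition diff_pow :: "real \<Rightarrow> nat \<Rightarrow> (real \<Rightarrow> real) \<Rightarrow> (real \<Rightarrow> real)" where
  "diff_pow h n = (diff_op h) ^^ n"

definition monomial_fun :: "nat \<Rightarrow> (real \<Rightarrow> real) \<Rightarrow> bool" where
  "monomial_fun n f \<longleftrightarrow> (\<forall>x h. diff_pow h n f x / fact n = f h)"

definition graph_of :: "(real \<Rightarrow> real) \<Rightarrow> (real \<times> real) set" where
  "graph_of f = {(x, f x) | x. x \<in> UNIV}"

end

theory Submission
  imports Defs
begin

(* Let n \<ge> 1 and let f satisfy f (m * h) = m ^ n * f h for all natural m
   (every n-monomial function does: the n-th difference with step m*h is an m^n-fold
   sum of n-th differences with step h).  In particular f 0 = 0.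

   G(g) is the image of G(f) under the continuous map (x, y) \<mapsto> (x, x * y), so
   connectedness of G(f) passes to G(g).  Conversely assume G(g) is connected and
   let T be clopen in G(f).  Away from the line x = 0 the map (x, y) \<mapsto> (x, y / x)
   carries G(g) back to G(f), which shows: if (t, f t) \<in> T then (b, f b) \<in> T for every
   b strictly between 0 and t (otherwise the part of T beyond b would give a clopen
   proper nonempty subset of G(g)).  Homogeneity makes the points (t/m, f (t/m)) tend
   to the origin, so every nonempty clopen T contains (0, 0); applied to T and to its
   complement this forces T = {} or T = G(f). *)

definition shift_sum :: "real \<Rightarrow> nat \<Rightarrow> (real \<Rightarrow> real) \<Rightarrow> real \<Rightarrow> real" where
  "shift_sum h m \<phi> = (\<lambda>x. \<Sum>j<m. \<phi> (x + real j * h))"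

text \<open>A difference with step m*h telescopes into m differences with step h.\<close>
lemma diff_op_mult_step: "diff_op (real m * h) \<phi> = shift_sum h m (diff_op h \<phi>)"
proof
  fix x
  have shift: "\<And>j. \<phi> (x + real j * h + h) = \<phi> (x + real (Suc j) * h)"
    by (simp add: algebra_simps)
  have "(\<Sum>j<m. \<phi> (x + real j * h + h) - \<phi> (x + real j * h)) = \<phi> (x + real m * h) - \<phi> x"
    unfolding shift using sum_lessThan_telescope[of "\<lambda>j. \<phi> (x + real j * h)" m] by simp
  then show "diff_op (real m * h) \<phi> x = shift_sum h m (diff_op h \<phi>) x"
    unfolding shift_sum_def diff_op_def by simp
qed

lemma diff_op_shift_sum: "diff_op h (shift_sum h m \<phi>) = shift_sum h m (diff_op h \<phi>)"
proof
  fix x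
  have shift: "\<And>j. \<phi> (x + h + real j * h) = \<phi> (x + real j * h + h)"
    by (simp add: algebra_simps)
  show "diff_op h (shift_sum h m \<phi>) x = shift_sum h m (diff_op h \<phi>) x"
    unfolding shift_sum_def diff_op_def shift by (simp add: sum_subtractf)
qed

lemma diff_op_shift_sum_pow:
  "diff_op h ((shift_sum h m ^^ n) \<phi>) = (shift_sum h m ^^ n) (diff_op h \<phi>)"
  by (induction n) (simp_all add: diff_op_shift_sum)

lemma diff_pow_mult_step:
  "diff_pow (real m * h) n \<phi> = (shift_sum h m ^^ n) (diff_pow h n \<phi>)"
proof (induction n)
  case 0
  then show ?case by (simp add: diff_pow_def)
next
  case (Suc n)
  have "diff_pow (real m * h) (Suc n) \<phi> = diff_op (real m * h) (diff_pow (real m * h) n \<phi>)"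
    by (simp add: diff_pow_def)
  also have "\<dots> = shift_sum h m (diff_op h ((shift_sum h m ^^ n) (diff_pow h n \<phi>)))"
    by (simp add: Suc diff_op_mult_step)
  also have "\<dots> = (shift_sum h m ^^ Suc n) (diff_pow h (Suc n) \<phi>)"
    by (simp add: diff_op_shift_sum_pow diff_pow_def funpow_swap1)
  finally show ?case .
qed

lemma shift_sum_pow_const: "(shift_sum h m ^^ n) (\<lambda>_. c) = (\<lambda>_. real m ^ n * c)"
  by (induction n) (simp_all add: shift_sum_def mult.assoc)

lemma monomial_fun_scale:
  assumes "monomial_fun n f"
  shows "f (real m * h) = real m ^ n * f h"
proof -
  have diff_const: "diff_pow h n f = (\<lambda>_. fact n * f h)" for h
    using assms unfolding monomial_fun_def by (auto simp: field_simps)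
  have "fact n * f (real m * h) = diff_pow (real m * h) n f 0"
    using diff_const by simp
  also have "\<dots> = real m ^ n * (fact n * f h)"
    unfolding diff_pow_mult_step by (simp add: diff_const shift_sum_pow_const)
  also have "\<dots> = fact n * (real m ^ n * f h)"
    by (rule mult.left_commute)
  finally show ?thesis by (metis fact_nonzero mult_left_cancel)
qed

text \<open>Homogeneity of positive degree forces f 0 = 0 (compare f 0 with f (2 * 0)).\<close>
lemma homogeneous_zero:
  fixes f :: "real \<Rightarrow> real"
  assumes "n \<ge> 1" and "\<And>m h. f (real m * h) = real m ^ n * f h"
  shows "f 0 = 0"
proof -
  have "f 0 = 2 ^ n * f 0" using assms(2)[of 2 0] by simp
  moreover have "(1::real) < 2 ^ n" using assms(1) by (intro one_less_power) auto
  ultimately show ?thesis by (metis less_irrefl mult_cancel_right2)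
qed

text \<open>G(x f x) is the image of G(f) under the shear (x, y) \<mapsto> (x, x y).\<close>
lemma connected_graph_mult_id:
  assumes "connected (graph_of f)"
  shows "connected (graph_of (\<lambda>x. x * f x))"
proof -
  have image: "graph_of (\<lambda>x. x * f x) = (\<lambda>p. (fst p, fst p * snd p)) ` graph_of f"
    by (auto simp: graph_of_def image_iff)
  have "continuous_on (graph_of f) (\<lambda>p::real \<times> real. (fst p, fst p * snd p))"
    by (intro continuous_intros)
  then show ?thesis unfolding image using assms by (rule connected_continuous_image)
qed

lemma graph_mult_id_vimage:
  fixes f :: "real \<Rightarrow> real"
  assumes "\<And>x. P x \<Longrightarrow> x \<noteq> 0"
  shows "graph_of (\<lambda>x. x * f x) \<inter> ((\<lambda>p. (fst p, snd p / fst p)) -` A \<inter> {p. P (fst p)})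
         = {(x, x * f x) | x. P x \<and> (x, f x) \<in> A}"
  using assms by (auto simp: graph_of_def)

text \<open>Main topological step: if G(x f x) is connected, a clopen subset T of G(f) that
  contains the graph point over t also contains the graph points over all b strictly
  between 0 and t (the condition b * b < b * t).  Otherwise the part of T lying beyond b,
  transported to G(x f x), would be clopen there, nonempty and missing the origin.\<close>
lemma clopen_graph_inward:
  fixes f :: "real \<Rightarrow> real" and T :: "(real \<times> real) set"
  assumes conn: "connected (graph_of (\<lambda>x. x * f x))"
    and T_open: "openin (top_of_set (graph_of f)) T"
    and T_closed: "closedin (top_of_set (graph_of f)) T"
    and b_nonzero: "b \<noteq> 0" and t_beyond: "b * b < b * t"
    and t_in: "(t, f t) \<in> T"
  shows "(b, f b) \<in> T"
proof (rule ccontr)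
  assume b_out: "(b, f b) \<notin> T"
  let ?H = "graph_of (\<lambda>x. x * f x)" and ?\<Psi> = "\<lambda>p::real \<times> real. (fst p, snd p / fst p)"
  obtain U where U: "open U" "T = graph_of f \<inter> U" using T_open openin_open by metis
  obtain C where C: "closed C" "T = graph_of f \<inter> C" using T_closed closedin_closed by metis
  have in_graph: "(x, f x) \<in> graph_of f" for x by (auto simp: graph_of_def)
  have beyond_nonzero: "x \<noteq> 0" if "b * b \<le> b * x" for x
    using that b_nonzero by (metis mult_eq_0_iff mult_zero_right order_antisym zero_le_square)
  define W where "W = {(x, x * f x) | x. b * b < b * x \<and> (x, f x) \<in> T}"
  have "W = {(x, x * f x) | x. b * b < b * x \<and> (x, f x) \<in> U}"
    unfolding W_def U(2) using in_graph by blast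
  also have "\<dots> = ?H \<inter> (?\<Psi> -` U \<inter> {p. b * b < b * fst p})"
    using beyond_nonzero by (intro graph_mult_id_vimage[symmetric]) auto
  finally have W_open: "W = ?H \<inter> (?\<Psi> -` U \<inter> {p. b * b < b * fst p})" .
  have "b * b < b * x" if "b * b \<le> b * x" "(x, f x) \<in> T" for x
    using that b_out b_nonzero by (metis mult_left_cancel order_le_less)
  then have "W = {(x, x * f x) | x. b * b \<le> b * x \<and> (x, f x) \<in> T}"
    unfolding W_def by (meson less_imp_le)
  also have "\<dots> = {(x, x * f x) | x. b * b \<le> b * x \<and> (x, f x) \<in> C}"
    unfolding C(2) using in_graph by blast
  also have "\<dots> = ?H \<inter> (?\<Psi> -` C \<inter> {p. b * b \<le> b * fst p})"
    using beyond_nonzero by (intro graph_mult_id_vimage[symmetric])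
  finally have W_closed: "W = ?H \<inter> (?\<Psi> -` C \<inter> {p. b * b \<le> b * fst p})" .
  have nonzero: "\<forall>p \<in> {p. b * b \<le> b * fst p}. fst p \<noteq> (0::real)"
    using beyond_nonzero by auto
  have "open (?\<Psi> -` U \<inter> {p. b * b < b * fst p})"
    using nonzero
    by (intro continuous_on_open_vimage[THEN iffD1, rule_format] open_Collect_less
        continuous_intros U(1)) auto
  then have "openin (top_of_set ?H) W" unfolding openin_open W_open by blast
  moreover have "closed (?\<Psi> -` C \<inter> {p. b * b \<le> b * fst p})"
    using nonzero
    by (intro continuous_on_closed_vimage[THEN iffD1, rule_format] closed_Collect_le
        continuous_intros C(1)) auto
  then have "closedin (top_of_set ?H) W" unfolding closedin_closed W_closed by blast
  ultimately have "W = {} \<or> W = ?H" using conn connected_clopen by blast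
  moreover have "(t, t * f t) \<in> W" unfolding W_def using t_in t_beyond by blast
  moreover have "(0, 0 * f 0) \<in> ?H" "(0, 0 * f 0) \<notin> W"
    unfolding W_def graph_of_def using beyond_nonzero by auto
  ultimately show False by blast
qed

lemma homogeneous_graph_tendsto_origin:
  fixes f :: "real \<Rightarrow> real"
  assumes n: "n \<ge> 1" and scale: "\<And>m h. f (real m * h) = real m ^ n * f h"
  shows "(\<lambda>j. (c / real (Suc j), f (c / real (Suc j)))) \<longlonglongrightarrow> (0, 0)"
proof -
  have f_values: "f (c / real (Suc j)) = f c * (1 / real (Suc j)) ^ n" for j
  proof -
    have "real (Suc j) * (c / real (Suc j)) = c" by simp
    then have "f c = real (Suc j) ^ n * f (c / real (Suc j))"
      using scale[of "Suc j" "c / real (Suc j)"] by simp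
    then show ?thesis by (simp add: power_one_over field_simps)
  qed
  have "(\<lambda>j. 1 / real (Suc j)) \<longlonglongrightarrow> 0"
    using LIMSEQ_inverse_real_of_nat by (simp add: inverse_eq_divide)
  then have "(\<lambda>j. (c * (1 / real (Suc j)), f c * (1 / real (Suc j)) ^ n))
               \<longlonglongrightarrow> (c * 0, f c * 0 ^ n)"
    by (intro tendsto_intros)
  then show ?thesis unfolding f_values using n by (simp add: power_0_left)
qed

lemma clopen_graph_contains_origin:
  fixes f :: "real \<Rightarrow> real" and T :: "(real \<times> real) set"
  assumes conn: "connected (graph_of (\<lambda>x. x * f x))"
    and T_open: "openin (top_of_set (graph_of f)) T"
    and T_closed: "closedin (top_of_set (graph_of f)) T"
    and n: "n \<ge> 1" and scale: "\<And>m h. f (real m * h) = real m ^ n * f h"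
    and T_nonempty: "T \<noteq> {}"
  shows "(0, 0) \<in> T"
proof -
  have f0: "f 0 = 0" using homogeneous_zero[OF n scale] .
  obtain t where t_in: "(t, f t) \<in> T"
    using T_nonempty openin_imp_subset[OF T_open] by (auto simp: graph_of_def)
  define x where "x = (\<lambda>j. t / real (Suc (Suc j)))"
  have inward: "(x j, f (x j)) \<in> T" for j
  proof (cases "t = 0")
    case False
    define k where "k = real (Suc (Suc j))"
    have "k < k * k" by (simp add: k_def)
    moreover have "0 < t * t" using False by (metis not_real_square_gt_zero)
    ultimately have "t * t / (k * k) < t * t / k"
      by (intro divide_strict_left_mono) (auto simp: k_def)
    then have "x j * x j < x j * t" by (simp add: x_def k_def)
    then show ?thesis
      using clopen_graph_inward[OF conn T_open T_closed _ _ t_in] False by (simp add: x_def)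
  qed (use t_in in \<open>simp add: x_def f0\<close>)
  have "(\<lambda>j. (x j, f (x j))) \<longlonglongrightarrow> (0, 0)"
    unfolding x_def using LIMSEQ_Suc[OF homogeneous_graph_tendsto_origin[OF n scale]] .
  obtain C where C: "closed C" "T = graph_of f \<inter> C"
    using T_closed closedin_closed by metis
  have "(0, 0) \<in> C"
  proof (rule closed_sequentially[OF C(1)])
    show "(x j, f (x j)) \<in> C" for j using inward C(2) by blast
  qed fact
  moreover have "(0, 0) \<in> graph_of f" using f0 by (auto simp: graph_of_def)
  ultimately show ?thesis using C(2) by blast
qed

text \<open>Hence connectedness of G(x f x) gives connectedness of G(f): of a clopen set and
  its complement, the one missing the origin must be empty.\<close>
lemma connected_graph_from_mult_id:
  fixes f :: "real \<Rightarrow> real"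
  assumes conn: "connected (graph_of (\<lambda>x. x * f x))"
    and n: "n \<ge> 1" and scale: "\<And>m h. f (real m * h) = real m ^ n * f h"
  shows "connected (graph_of f)"
  unfolding connected_clopen
proof (intro allI impI)
  let ?G = "graph_of f"
  fix T assume T: "openin (top_of_set ?G) T \<and> closedin (top_of_set ?G) T"
  then have "openin (top_of_set ?G) (?G - T)" "closedin (top_of_set ?G) (?G - T)"
    by (simp_all add: openin_diff closedin_diff)
  then have "?G - T = {} \<or> T = {}"
    using clopen_graph_contains_origin[OF conn _ _ n scale] T by blast
  then show "T = {} \<or> T = ?G" using T openin_imp_subset by blast
qed

theorem mainTheorem7:
  fixes k :: nat and f :: "real \<Rightarrow> real"
  assumes "monomial_fun (2 * k + 1) f"
    and "\<not> continuous_on UNIV f"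
  shows "connected (graph_of f) \<longleftrightarrow> connected (graph_of (\<lambda>x. x * f x))"
proof
  have scale: "\<And>m h. f (real m * h) = real m ^ (2 * k + 1) * f h"
    using monomial_fun_scale[OF assms(1)] .
  assume "connected (graph_of (\<lambda>x. x * f x))"
  then show "connected (graph_of f)"
    by (rule connected_graph_from_mult_id[OF _ _ scale]) simp
qed (rule connected_graph_mult_id)

end
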